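(* Let $\phi\in L^2(\mathbb{R})$ be compactly supported and not almost everywhere zero, and let $B>0$. Then for all $f,g\in\mathrm{PW}^2_B$ the following are equivalent: (1) $f=e^{i\alpha}g$ for some $\alpha\in\mathbb{R}$; (2) $|\mathcal{V}_\phi f(x,\omega)|=|\mathcal{V}_\phi g(x,\omega)|$ for all $x,\omega\in\mathbb{R}$.
   Context: For $B>0$, the Paley--Wiener space is $\mathrm{PW}^2_B:=\{f:\mathbb{C}\to\mathbb{C} \mid \exists F\in L^2([-B,B])\ \forall z\in\mathbb{C}: f(z)=\int_{-B}^B F(\xi)e^{2\pi i \xi z}\,d\xi\}$; its elements are identified with their restrictions to $\mathbb{R}$ (which lie in $L^2(\mathbb{R})$) when transforms are applied. For $f,\phi\in L^2(\mathbb{R})$ the short-time Fourier transform is $\mathcal{V}_\phi f(x,\omega)=\int_{\mathbb{R}} f(t)\overline{\phi(t-x)}e^{-2\pi i t\omega}\,dt$, $x,\omega\in\mathbb{R}$. *)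

theory Defs
  imports "HOL-Analysis.Analysis"
begin

definition square_integrable_on :: "(real \<Rightarrow> complex) \<Rightarrow> real set \<Rightarrow> bool" where
  "square_integrable_on F S \<longleftrightarrow>
     set_borel_measurable lebesgue S F \<and>
     set_integrable lebesgue S (\<lambda>x. (cmod (F x))\<^sup>2)"

definition paley_wiener :: "real \<Rightarrow> (complex \<Rightarrow> complex) set" where
  "paley_wiener B = {f. \<exists>F. square_integrable_on F {-B..B} \<and>
     (\<forall>z. f z = (LINT \<xi>:{-B..B}|lebesgue. F \<xi> * exp (2 * pi * \<i> * complex_of_real \<xi> * z)))}"

definition stft :: "(real \<Rightarrow> complex) \<Rightarrow> (real \<Rightarrow> complex) \<Rightarrow> real \<Rightarrow> real \<Rightarrow> complex" where
  "stft \<phi> f x \<omega> = (LINT t|lebesgue. f t * cnj (\<phi> (t - x)) * exp (- 2 * pi * \<i> * complex_of_real t * complex_of_real \<omega>))"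

definition compactly_supported :: "(real \<Rightarrow> complex) \<Rightarrow> bool" where
  "compactly_supported \<phi> \<longleftrightarrow> (\<exists>R. AE t in lebesgue. \<bar>t\<bar> > R \<longrightarrow> \<phi> t = 0)"

end

theory Submission
  imports Defs "HOL-Probability.Probability" "HOL-Complex_Analysis.Complex_Analysis"
begin

text \<open>Write \<open>f\<close> and \<open>g\<close> as Fourier transforms of integrable spectra supported in \<open>[-B, B]\<close>.
  The squared modulus \<open>\<bar>V\<^sub>\<phi> f(x, \<cdot>)\<bar>\<^sup>2\<close> is the Fourier transform of the autocorrelation of
  \<open>t \<mapsto> f t \<cdot> cnj (\<phi> (t - x))\<close>, so by Fourier uniqueness equal magnitudes mean that, for almost every
  shift \<open>s\<close> and all \<open>x\<close>, the shift products \<open>f t \<cdot> cnj (f (t - s))\<close> and \<open>g t \<cdot> cnj (g (t - s))\<close> have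
  the same convolution with the window product \<open>cnj (\<phi> u) \<cdot> \<phi> (u - s)\<close>.  The window product is
  compactly supported, so its Fourier transform is entire and, unless it vanishes, has only countably
  many real zeros; deconvolving in frequency shows that the shift products agree for all \<open>s\<close> outside
  a null set.  As functions of \<open>s\<close> they extend to entire functions, so they agree for all \<open>s\<close>, and
  this forces \<open>f = c \<cdot> g\<close> with \<open>\<bar>c\<bar> = 1\<close>.\<close>

subsection \<open>The Fourier transform\<close>

lemma borel_measurable_cnj[measurable]:
  "f \<in> borel_measurable M \<Longrightarrow> (\<lambda>x. cnj (f x :: complex)) \<in> borel_measurable M"
  by (rule borel_measurable_continuous_on[where f=cnj]) (auto intro: continuous_intros)

definition fourier_kernel :: "real \<Rightarrow> real \<Rightarrow> complex" where
  "fourier_kernel t \<omega> = exp (complex_of_real (- 2 * pi) * \<i> * complex_of_real t * complex_of_real \<omega>)"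

definition fourier :: "(real \<Rightarrow> complex) \<Rightarrow> real \<Rightarrow> complex" where
  "fourier h \<omega> = (LBINT t. h t * fourier_kernel t \<omega>)"

lemma borel_measurable_fourier_kernel[measurable]:
  assumes [measurable]: "f \<in> borel_measurable M" "g \<in> borel_measurable M"
  shows "(\<lambda>x. fourier_kernel (f x) (g x)) \<in> borel_measurable M"
  unfolding fourier_kernel_def by measurable

lemma fourier_kernel_add: "fourier_kernel a \<omega> * fourier_kernel b \<omega> = fourier_kernel (a + b) \<omega>"
  unfolding fourier_kernel_def by (simp add: exp_add[symmetric] algebra_simps)

lemma fourier_kernel_minus: "fourier_kernel (- a) b = fourier_kernel a (- b)"
  unfolding fourier_kernel_def by (simp add: algebra_simps)

lemma cnj_fourier_kernel: "cnj (fourier_kernel a \<omega>) = fourier_kernel (- a) \<omega>"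
  unfolding fourier_kernel_def by (simp add: exp_cnj)

lemma norm_fourier_kernel[simp]: "norm (fourier_kernel a \<omega>) = 1"
proof -
  have "complex_of_real (- 2 * pi) * \<i> * complex_of_real a * complex_of_real \<omega> = \<i> * complex_of_real (- 2 * pi * a * \<omega>)"
    by simp
  then show ?thesis unfolding fourier_kernel_def by (simp only: norm_exp_i_times)
qed

lemma integrable_mult_bounded:
  fixes a b :: "real \<Rightarrow> complex"
  assumes "integrable lborel b" "a \<in> borel_measurable borel" "\<And>t. norm (a t) \<le> C"
  shows "integrable lborel (\<lambda>t. a t * b t)"
proof (rule Bochner_Integration.integrable_bound[where f="\<lambda>t. C * b t"])
  show "integrable lborel (\<lambda>t. C * b t)" using assms by simp
  have [measurable]: "b \<in> borel_measurable borel" using assms by auto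
  show "(\<lambda>t. a t * b t) \<in> borel_measurable lborel" using assms(2) by measurable
  have "0 \<le> C" using assms(3)[of 0] norm_ge_zero order_trans by blast
  then show "AE t in lborel. norm (a t * b t) \<le> norm (C * b t)"
    using assms(3) by (intro AE_I2) (simp add: norm_mult mult_right_mono)
qed

lemma integrable_mult_fourier_kernel:
  fixes h :: "real \<Rightarrow> complex"
  assumes "integrable lborel h" and [measurable]: "a \<in> borel_measurable borel" "b \<in> borel_measurable borel"
  shows "integrable lborel (\<lambda>t. h t * fourier_kernel (a t) (b t))"
  using assms(1) integrable_mult_bounded[of h "\<lambda>t. fourier_kernel (a t) (b t)" 1] by (simp add: mult.commute)

lemma norm_fourier_le: "norm (fourier h \<omega>) \<le> (LBINT t. norm (h t))"
  using integral_norm_bound[of lborel "\<lambda>t. h t * fourier_kernel t \<omega>"]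
  by (simp add: fourier_def norm_mult)

lemma fourier_diff:
  assumes "integrable lborel h" "integrable lborel k"
  shows "fourier (\<lambda>t. h t - k t) \<omega> = fourier h \<omega> - fourier k \<omega>"
  unfolding fourier_def
  by (subst Bochner_Integration.integral_diff[symmetric])
     (auto intro: integrable_mult_fourier_kernel assms simp: algebra_simps)

subsection \<open>Uniqueness of the Fourier transform\<close>

lemma char_density_lborel:
  fixes p :: "real \<Rightarrow> real"
  assumes [measurable]: "p \<in> borel_measurable borel" and "\<And>x. 0 \<le> p x"
  shows "char (density lborel (\<lambda>x. ennreal (p x))) t = (LBINT x. p x *\<^sub>R iexp (t * x))"
  unfolding char_def using assms(2) by (subst integral_density) auto

lemma real_distribution_density_lborel:
  fixes p :: "real \<Rightarrow> real"
  assumes [measurable]: "p \<in> borel_measurable borel" and "\<And>x. 0 \<le> p x"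
    and "integrable lborel p" and "(LBINT x. p x) = 1"
  shows "real_distribution (density lborel (\<lambda>x. ennreal (p x)))"
proof -
  have "emeasure (density lborel (\<lambda>x. ennreal (p x))) UNIV = (\<integral>\<^sup>+x. ennreal (p x) \<partial>lborel)"
    by (subst emeasure_density) auto
  also have "\<dots> = ennreal (LBINT x. p x)"
    using assms by (subst nn_integral_eq_integral) auto
  finally show ?thesis
    using assms unfolding real_distribution_def real_distribution_axioms_def
    by (auto intro!: prob_spaceI)
qed

text \<open>Normalising to probability densities reduces this to Levy's uniqueness theorem for
  characteristic functions.\<close>
lemma AE_eq_if_iexp_transforms_eq:
  fixes p q :: "real \<Rightarrow> real"
  assumes p: "integrable lborel p" "\<And>x. 0 \<le> p x" and q: "integrable lborel q" "\<And>x. 0 \<le> q x"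
    and eq: "\<And>t. (LBINT x. p x *\<^sub>R iexp (t * x)) = (LBINT x. q x *\<^sub>R iexp (t * x))"
  shows "AE x in lborel. p x = q x"
proof -
  have [measurable]: "p \<in> borel_measurable borel" "q \<in> borel_measurable borel"
    using p q by auto
  define m where "m = (LBINT x. p x)"
  have m: "(LBINT x. q x) = m"
    using eq[of 0] by (simp add: m_def scaleR_conv_of_real)
  show ?thesis
  proof (cases "m = 0")
    case True
    have "AE x in lborel. p x = 0"
      using True p by (simp add: m_def integral_nonneg_eq_0_iff_AE)
    moreover have "AE x in lborel. q x = 0"
      using True q m by (simp add: integral_nonneg_eq_0_iff_AE)
    ultimately show ?thesis by eventually_elim simp
  next
    case False
    then have m_pos: "m > 0" using p by (simp add: m_def order.not_eq_order_implies_strict)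
    let ?P = "density lborel (\<lambda>x. ennreal (p x / m))" and ?Q = "density lborel (\<lambda>x. ennreal (q x / m))"
    have "real_distribution ?P" "real_distribution ?Q"
      using m_pos p q m by (auto simp: m_def intro!: real_distribution_density_lborel)
    moreover have "char ?P = char ?Q"
    proof
      fix t
      have "(LBINT x. (r x / m) *\<^sub>R iexp (t * x)) = (1/m) *\<^sub>R (LBINT x. r x *\<^sub>R iexp (t * x))" for r
        by (subst integral_scaleR_right[symmetric]) (simp add: divide_inverse mult.commute)
      then show "char ?P t = char ?Q t"
        using m_pos p q eq[of t] by (subst (1 2) char_density_lborel) auto
    qed
    ultimately have "?P = ?Q" by (rule Levy_uniqueness)
    moreover have "(\<integral>\<^sup>+x. ennreal (p x / m) \<partial>lborel) \<noteq> \<infinity>"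
      using m_pos p by (subst nn_integral_eq_integral) auto
    ultimately have "AE x in lborel. ennreal (p x / m) = ennreal (q x / m)"
      by (subst (asm) finite_density_unique) auto
    then show ?thesis
      by eventually_elim (use m_pos p q in \<open>simp add: ennreal_inj\<close>)
  qed
qed

lemma real_iexp_transform_uniqueness:
  fixes d :: "real \<Rightarrow> real"
  assumes d: "integrable lborel d" and zero: "\<And>t. (LBINT x. d x *\<^sub>R iexp (t * x)) = 0"
  shows "AE x in lborel. d x = 0"
proof -
  define dp where "dp x = max (d x) 0" for x
  define dn where "dn x = max (- d x) 0" for x
  have [measurable]: "d \<in> borel_measurable borel" using d by auto
  have int: "integrable lborel dp" "integrable lborel dn"
    unfolding dp_def dn_def using d by auto
  have d_eq: "d x = dp x - dn x" for x by (auto simp: dp_def dn_def)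
  have "AE x in lborel. dp x = dn x"
  proof (rule AE_eq_if_iexp_transforms_eq[OF int(1) _ int(2)])
    fix t
    have "integrable lborel (\<lambda>x. r x *\<^sub>R iexp (t * x))" if "integrable lborel r" for r
      using integrable_mult_bounded[of "\<lambda>x. complex_of_real (r x)" "\<lambda>x. iexp (t * x)" 1] that
      by (simp add: scaleR_conv_of_real norm_exp_i_times mult.commute)
    then have "(LBINT x. dp x *\<^sub>R iexp (t * x)) - (LBINT x. dn x *\<^sub>R iexp (t * x)) = (LBINT x. d x *\<^sub>R iexp (t * x))"
      using int by (subst Bochner_Integration.integral_diff[symmetric]) (auto simp: d_eq scaleR_diff_left)
    then show "(LBINT x. dp x *\<^sub>R iexp (t * x)) = (LBINT x. dn x *\<^sub>R iexp (t * x))"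
      using zero[of t] by simp
  qed (auto simp: dp_def dn_def)
  then show ?thesis by eventually_elim (simp add: d_eq)
qed

lemma iexp_transform_uniqueness:
  fixes D :: "real \<Rightarrow> complex"
  assumes D: "integrable lborel D" and zero: "\<And>t. (LBINT x. D x * iexp (t * x)) = 0"
  shows "AE x in lborel. D x = 0"
proof -
  have [measurable]: "D \<in> borel_measurable borel" using D by auto
  have int: "integrable lborel (\<lambda>x. r x * iexp (t * x))" if "integrable lborel r" for r :: "real \<Rightarrow> complex" and t
    using integrable_mult_bounded[of r "\<lambda>x. iexp (t * x)" 1] that by (simp add: norm_exp_i_times mult.commute)
  text \<open>The transform of the conjugate is the conjugate of the transform at the reflected frequency.\<close>
  have zero_cnj: "(LBINT x. cnj (D x) * iexp (t * x)) = 0" for t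
  proof -
    have "(LBINT x. cnj (D x) * iexp (t * x)) = (LBINT x. cnj (D x * iexp ((- t) * x)))"
      by (intro Bochner_Integration.integral_cong refl) (simp add: exp_cnj)
    also have "\<dots> = cnj (LBINT x. D x * iexp ((- t) * x))"
      by (rule Bochner_Integration.integral_cnj)
    finally show ?thesis using zero[of "- t"] by simp
  qed
  have Re_eq: "complex_of_real (Re z) = (z + cnj z) / 2" and Im_eq: "complex_of_real (Im z) = (z - cnj z) / (2 * \<i>)"
    for z by (simp_all add: complex_eq_iff)
  have "AE x in lborel. Re (D x) = 0"
  proof (rule real_iexp_transform_uniqueness)
    fix t
    have "(LBINT x. Re (D x) *\<^sub>R iexp (t * x)) = (LBINT x. (D x * iexp (t * x) + cnj (D x) * iexp (t * x)) / 2)"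
      by (intro Bochner_Integration.integral_cong refl)
         (simp add: scaleR_conv_of_real Re_eq algebra_simps add_divide_distrib)
    also have "\<dots> = ((LBINT x. D x * iexp (t * x)) + (LBINT x. cnj (D x) * iexp (t * x))) / 2"
      using D by (subst Bochner_Integration.integral_add[OF int int, symmetric]) auto
    finally show "(LBINT x. Re (D x) *\<^sub>R iexp (t * x)) = 0"
      using zero zero_cnj by simp
  qed (use D in simp)
  moreover have "AE x in lborel. Im (D x) = 0"
  proof (rule real_iexp_transform_uniqueness)
    fix t
    have "(LBINT x. Im (D x) *\<^sub>R iexp (t * x)) = (LBINT x. (D x * iexp (t * x) - cnj (D x) * iexp (t * x)) / (2 * \<i>))"
      by (intro Bochner_Integration.integral_cong refl)
         (simp add: scaleR_conv_of_real Im_eq algebra_simps diff_divide_distrib)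
    also have "\<dots> = ((LBINT x. D x * iexp (t * x)) - (LBINT x. cnj (D x) * iexp (t * x))) / (2 * \<i>)"
      using D by (subst Bochner_Integration.integral_diff[OF int int, symmetric]) auto
    finally show "(LBINT x. Im (D x) *\<^sub>R iexp (t * x)) = 0"
      using zero zero_cnj by simp
  qed (use D in simp)
  ultimately show ?thesis by eventually_elim (simp add: complex_eq_iff)
qed

lemma fourier_uniqueness:
  fixes D :: "real \<Rightarrow> complex"
  assumes D: "integrable lborel D" and zero: "\<And>\<omega>. fourier D \<omega> = 0"
  shows "AE x in lborel. D x = 0"
proof (rule iexp_transform_uniqueness[OF D])
  fix t
  have "(LBINT x. D x * iexp (t * x)) = fourier D (- t / (2 * pi))"
    unfolding fourier_def fourier_kernel_def
    by (intro Bochner_Integration.integral_cong refl) (simp add: field_simps)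
  then show "(LBINT x. D x * iexp (t * x)) = 0" using zero by simp
qed

subsection \<open>Continuity and holomorphy of transforms\<close>

lemma integral_dominated_convergence_at:
  fixes s :: "'c::metric_space \<Rightarrow> 'a \<Rightarrow> 'b::{banach, second_countable_topology}"
  assumes "\<And>y. s y \<in> borel_measurable M" "f \<in> borel_measurable M" "integrable M w"
    and lim: "AE x in M. ((\<lambda>y. s y x) \<longlongrightarrow> f x) (at z within S)"
    and bound: "\<forall>\<^sub>F y in at z within S. AE x in M. norm (s y x) \<le> w x"
  shows "((\<lambda>y. integral\<^sup>L M (s y)) \<longlongrightarrow> integral\<^sup>L M f) (at z within S)"
proof (subst tendsto_at_iff_sequentially, intro allI impI)
  fix X :: "nat \<Rightarrow> 'c" assume "\<forall>i. X i \<in> S - {z}" "X \<longlonglongrightarrow> z"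
  then have X: "filterlim X (at z within S) sequentially"
    by (auto simp: filterlim_at)
  from filterlim_iff[THEN iffD1, OF X, rule_format, OF bound]
  obtain N where N: "\<And>n. N \<le> n \<Longrightarrow> AE x in M. norm (s (X n) x) \<le> w x"
    by (auto simp: eventually_sequentially)
  show "((\<lambda>y. integral\<^sup>L M (s y)) \<circ> X) \<longlonglongrightarrow> integral\<^sup>L M f"
    unfolding comp_def
  proof (rule LIMSEQ_offset, rule integral_dominated_convergence)
    show "AE x in M. norm (s (X (n + N)) x) \<le> w x" for n
      by (rule N) simp
    show "AE x in M. (\<lambda>n. s (X (n + N)) x) \<longlonglongrightarrow> f x"
      using lim by eventually_elim (intro LIMSEQ_ignore_initial_segment filterlim_compose[OF _ X])
  qed (use assms N in auto)
qed

lemma continuous_fourier: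
  assumes h: "integrable lborel h"
  shows "continuous_on UNIV (fourier h)"
  unfolding continuous_on_eq_continuous_at[OF open_UNIV] isCont_def fourier_def
proof (intro ballI integral_dominated_convergence_at[where w="\<lambda>t. norm (h t)"])
  have [measurable]: "h \<in> borel_measurable borel" using h by auto
  fix \<omega>0 :: real
  show "AE t in lborel. ((\<lambda>\<omega>. h t * fourier_kernel t \<omega>) \<longlongrightarrow> h t * fourier_kernel t \<omega>0) (at \<omega>0)"
    unfolding fourier_kernel_def by (intro AE_I2 tendsto_intros)
qed (use h in \<open>auto simp: norm_mult\<close>)

lemma continuous_on_integral_mult_shift:
  fixes q W :: "real \<Rightarrow> complex"
  assumes q: "continuous_on UNIV q" "\<And>t. norm (q t) \<le> C" and W: "integrable lborel W"
  shows "continuous_on UNIV (\<lambda>x. LBINT t. q t * W (t - x))"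
proof -
  have [measurable]: "q \<in> borel_measurable borel" "W \<in> borel_measurable borel"
    using borel_measurable_continuous_onI[OF q(1)] W by auto
  have shift: "(LBINT t. q t * W (t - x)) = (LBINT u. q (x + u) * W u)" for x
    using lborel_integral_real_affine[of 1 "\<lambda>t. q t * W (t - x)" x] by simp
  show ?thesis
    unfolding shift continuous_on_eq_continuous_at[OF open_UNIV] isCont_def
  proof (intro ballI integral_dominated_convergence_at[where w="\<lambda>u. C * norm (W u)"])
    fix x0 :: real
    show "AE u in lborel. ((\<lambda>x. q (x + u) * W u) \<longlongrightarrow> q (x0 + u) * W u) (at x0)"
    proof (intro AE_I2 tendsto_mult tendsto_const)
      fix u
      have "continuous_on UNIV (\<lambda>x. q (x + u))"
        by (intro continuous_on_compose2[OF q(1)] continuous_intros) auto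
      then show "((\<lambda>x. q (x + u)) \<longlongrightarrow> q (x0 + u)) (at x0)"
        by (simp add: continuous_on_eq_continuous_at isCont_def)
    qed
    show "\<forall>\<^sub>F x in at x0. AE u in lborel. norm (q (x + u) * W u) \<le> C * norm (W u)"
      using q(2) by (intro always_eventually allI AE_I2) (simp add: norm_mult mult_right_mono)
  qed (use W in auto)
qed

lemma norm_exp_difference_quotient_le:
  fixes a y z :: complex
  assumes a: "norm a \<le> L" and yz: "L * norm (y - z) \<le> 1/2" "y \<noteq> z"
  shows "norm ((exp (a * y) - exp (a * z)) / (y - z)) \<le> exp (L * norm z) * (3/2 * L)"
proof -
  have "exp (a * y) - exp (a * z) = exp (a * z) * (exp (a * (y - z)) - 1)"
    by (simp add: algebra_simps exp_add[symmetric])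
  then have "norm ((exp (a * y) - exp (a * z)) / (y - z)) = norm (exp (a * z)) * norm (exp (a * (y - z)) - 1) / norm (y - z)"
    by (simp add: norm_mult norm_divide)
  also have "\<dots> \<le> exp (L * norm z) * (3/2 * (L * norm (y - z))) / norm (y - z)"
  proof (intro divide_right_mono mult_mono)
    show "norm (exp (a * z)) \<le> exp (L * norm z)"
      using norm_exp[of "a * z"] a by (simp add: norm_mult mult_right_mono order_trans)
    have "norm (a * (y - z)) \<le> L * norm (y - z)"
      using a by (simp add: norm_mult mult_right_mono)
    then show "norm (exp (a * (y - z)) - 1) \<le> 3 / 2 * (L * norm (y - z))"
      using norm_exp_bounds[of "a * (y - z)"] yz(1) by simp
  qed (use a in auto)
  also have "\<dots> = exp (L * norm z) * (3/2 * L)"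
    using yz(2) by simp
  finally show ?thesis .
qed

definition exp_transform :: "complex \<Rightarrow> (real \<Rightarrow> complex) \<Rightarrow> complex \<Rightarrow> complex" where
  "exp_transform c F z = (LBINT \<xi>. F \<xi> * exp (c * complex_of_real \<xi> * z))"

lemma norm_exp_compact_support_le:
  assumes "\<bar>\<xi>\<bar> \<le> K"
  shows "norm (exp (c * complex_of_real \<xi> * z)) \<le> exp (norm c * K * norm z)"
proof -
  have "norm (c * complex_of_real \<xi> * z) \<le> norm c * K * norm z"
    using assms by (simp add: norm_mult mult_mono mult_right_mono)
  then show ?thesis
    using norm_exp[of "c * complex_of_real \<xi> * z"] by (meson exp_le_cancel_iff order_trans)
qed

lemma integrable_mult_exp_compact_support:
  fixes F :: "real \<Rightarrow> complex"
  assumes F: "integrable lborel F" and support: "\<And>\<xi>. \<bar>\<xi>\<bar> > K \<Longrightarrow> F \<xi> = 0"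
  shows "integrable lborel (\<lambda>\<xi>. F \<xi> * exp (c * complex_of_real \<xi> * z))"
proof (rule Bochner_Integration.integrable_bound[of _ "\<lambda>\<xi>. exp (norm c * K * norm z) * F \<xi>"])
  have in_support: "\<bar>\<xi>\<bar> \<le> K" if "F \<xi> \<noteq> 0" for \<xi>
    using support[of \<xi>] that by fastforce
  have [measurable]: "F \<in> borel_measurable borel" using F by auto
  show "integrable lborel (\<lambda>\<xi>. exp (norm c * K * norm z) * F \<xi>)" using F by simp
  show "(\<lambda>\<xi>. F \<xi> * exp (c * complex_of_real \<xi> * z)) \<in> borel_measurable lborel" by measurable
  have "norm (F \<xi> * exp (c * complex_of_real \<xi> * z)) \<le> norm (exp (norm c * K * norm z) * F \<xi>)" for \<xi>
    using mult_left_mono[OF norm_exp_compact_support_le[OF in_support] norm_ge_zero[of "F \<xi>"]]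
    by (cases "F \<xi> = 0") (simp_all add: norm_mult mult.commute)
  then show "AE \<xi> in lborel. norm (F \<xi> * exp (c * complex_of_real \<xi> * z)) \<le> norm (exp (norm c * K * norm z) * F \<xi>)"
    by simp
qed

lemma exp_transform_difference_quotient:
  assumes F: "integrable lborel F" and support: "\<And>\<xi>. \<bar>\<xi>\<bar> > K \<Longrightarrow> F \<xi> = 0"
  shows "(exp_transform c F y - exp_transform c F z) / (y - z)
    = (LBINT \<xi>. F \<xi> * ((exp (c * of_real \<xi> * y) - exp (c * of_real \<xi> * z)) / (y - z)))"
proof -
  have "exp_transform c F y - exp_transform c F z
      = (LBINT \<xi>. F \<xi> * exp (c * of_real \<xi> * y) - F \<xi> * exp (c * of_real \<xi> * z))"
    unfolding exp_transform_def
    by (intro Bochner_Integration.integral_diff[symmetric] integrable_mult_exp_compact_support[OF F support])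
  then show ?thesis
    by (simp only: times_divide_eq_right right_diff_distrib Bochner_Integration.integral_divide_zero)
qed

lemma exp_transform_has_field_derivative:
  fixes F :: "real \<Rightarrow> complex"
  assumes F: "integrable lborel F" and support: "\<And>\<xi>. \<bar>\<xi>\<bar> > K \<Longrightarrow> F \<xi> = 0"
  shows "(exp_transform c F has_field_derivative
           (LBINT \<xi>. F \<xi> * (c * complex_of_real \<xi> * exp (c * complex_of_real \<xi> * z)))) (at z)"
proof -
  have [measurable]: "F \<in> borel_measurable borel" using F by auto
  define L where "L = norm c * max K 0"
  define quot where "quot \<xi> y = F \<xi> * ((exp (c * of_real \<xi> * y) - exp (c * of_real \<xi> * z)) / (y - z))" for \<xi> y
  define \<delta> where "\<delta> = 1 / (2 * (L + 1))"
  have L: "0 \<le> L" by (simp add: L_def)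
  then have \<delta>: "\<delta> > 0" by (simp add: \<delta>_def)
  have "((\<lambda>y. LBINT \<xi>. quot \<xi> y) \<longlongrightarrow> (LBINT \<xi>. F \<xi> * (c * of_real \<xi> * exp (c * of_real \<xi> * z)))) (at z)"
  proof (rule integral_dominated_convergence_at[where w="\<lambda>\<xi>. norm (F \<xi>) * (exp (L * norm z) * (3/2 * L))"])
    show "AE \<xi> in lborel. ((\<lambda>y. quot \<xi> y) \<longlongrightarrow> F \<xi> * (c * of_real \<xi> * exp (c * of_real \<xi> * z))) (at z)"
      unfolding quot_def
    proof (intro AE_I2 tendsto_mult tendsto_const)
      fix \<xi> :: real
      have "((\<lambda>y. exp (c * of_real \<xi> * y)) has_field_derivative (c * of_real \<xi> * exp (c * of_real \<xi> * z))) (at z)"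
        by (auto intro!: derivative_eq_intros)
      then show "((\<lambda>y. (exp (c * of_real \<xi> * y) - exp (c * of_real \<xi> * z)) / (y - z))
          \<longlongrightarrow> c * of_real \<xi> * exp (c * of_real \<xi> * z)) (at z)"
        by (simp add: has_field_derivative_iff)
    qed
    have "\<forall>\<^sub>F y in at z. y \<noteq> z \<and> dist y z < \<delta>"
      using \<delta> by (auto simp: eventually_at)
    then show "\<forall>\<^sub>F y in at z. AE \<xi> in lborel. norm (quot \<xi> y) \<le> norm (F \<xi>) * (exp (L * norm z) * (3/2 * L))"
    proof eventually_elim
      case (elim y)
      have "L * norm (y - z) \<le> L * \<delta>"
        using elim L by (intro mult_left_mono) (auto simp: dist_norm)
      also have "\<dots> \<le> 1/2" using L by (simp add: \<delta>_def field_simps)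
      finally have yz: "L * norm (y - z) \<le> 1/2" .
      have "norm (quot \<xi> y) \<le> norm (F \<xi>) * (exp (L * norm z) * (3/2 * L))" for \<xi>
      proof (cases "F \<xi> = 0")
        case False
        then have "\<bar>\<xi>\<bar> \<le> K" using support[of \<xi>] by fastforce
        then have "norm (c * of_real \<xi>) \<le> L"
          by (simp add: L_def norm_mult mult_left_mono)
        then show ?thesis
          unfolding quot_def norm_mult
          by (intro mult_left_mono norm_exp_difference_quotient_le[OF _ yz]) (use elim in \<open>auto simp: norm_mult\<close>)
      qed (simp add: quot_def)
      then show ?case by simp
    qed
  qed (unfold quot_def, measurable, use F in simp)
  then show ?thesis
    by (simp add: has_field_derivative_iff quot_def exp_transform_difference_quotient[OF F support])
qed

lemma exp_transform_holomorphic: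
  assumes "integrable lborel F" "\<And>\<xi>. \<bar>\<xi>\<bar> > K \<Longrightarrow> F \<xi> = 0"
  shows "exp_transform c F holomorphic_on UNIV"
  using exp_transform_has_field_derivative[OF assms]
  by (auto simp: holomorphic_on_def field_differentiable_def)

lemma entire_eq_zero_if_zero_on_reals:
  fixes H :: "complex \<Rightarrow> complex"
  assumes "H holomorphic_on UNIV" and "\<And>t::real. H (complex_of_real t) = 0"
  shows "H z = 0"
proof (rule analytic_continuation[OF assms(1) open_UNIV connected_UNIV subset_UNIV UNIV_I])
  show "0 islimpt range complex_of_real"
    unfolding islimpt_approachable
  proof (intro allI impI)
    fix e :: real assume "0 < e"
    then show "\<exists>x'\<in>range complex_of_real. x' \<noteq> 0 \<and> dist x' 0 < e"
      by (intro bexI[of _ "complex_of_real (e/2)"] rangeI) (auto simp: dist_norm)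
  qed
qed (use assms(2) in auto)

lemma countable_real_zeros_of_entire:
  fixes H :: "complex \<Rightarrow> complex"
  assumes holo: "H holomorphic_on UNIV" and nz: "H (complex_of_real \<nu>0) \<noteq> 0"
  shows "countable {\<nu>::real. H (complex_of_real \<nu>) = 0}"
proof -
  have "countable {z. H z = 0}"
  proof (cases "H constant_on UNIV")
    case True
    then have "{z. H z = 0} = {}" using nz by (auto simp: constant_on_def)
    then show ?thesis by simp
  next
    case False
    from holomorphic_countable_zeros[OF holo open_UNIV connected_UNIV fsigma_UNIV False]
    show ?thesis by simp
  qed
  then have "countable (complex_of_real ` {\<nu>::real. H (complex_of_real \<nu>) = 0})"
    by (rule countable_subset[rotated]) auto
  then show ?thesis by (rule countable_image_inj_on) (auto intro: inj_onI)
qed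

lemma AE_eq_borel_if_lebesgue_measurable:
  fixes g :: "real \<Rightarrow> complex"
  assumes "g \<in> borel_measurable lebesgue"
  obtains g' where "g' \<in> borel_measurable borel" "AE x in lborel. g x = g' x"
proof -
  have "(\<lambda>x. Re (g x)) \<in> borel_measurable (completion lborel)" "(\<lambda>x. Im (g x)) \<in> borel_measurable (completion lborel)"
    using assms by measurable
  from this[THEN completion_ex_borel_measurable_real]
  obtain r i where r: "r \<in> borel_measurable lborel" "AE x in lborel. Re (g x) = r x"
    and i: "i \<in> borel_measurable lborel" "AE x in lborel. Im (g x) = i x"
    by blast
  have [measurable]: "r \<in> borel_measurable borel" "i \<in> borel_measurable borel" using r(1) i(1) by auto
  have "(\<lambda>x. complex_of_real (r x) + \<i> * complex_of_real (i x)) \<in> borel_measurable borel"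
    by measurable
  moreover have "AE x in lborel. g x = complex_of_real (r x) + \<i> * complex_of_real (i x)"
    using r(2) i(2) by eventually_elim (simp add: complex_eq_iff)
  ultimately show ?thesis using that by blast
qed

lemma AE_lborel_shift:
  fixes c :: real
  assumes "AE x in lborel. P x"
  shows "AE t in lborel. P (t - c)"
proof -
  obtain N where N: "\<And>x. x \<in> space lborel - N \<Longrightarrow> P x" "N \<in> null_sets lborel"
    using AE_E3[OF assms] by blast
  show ?thesis
    by (rule AE_I'[OF null_sets_translation[OF N(2), of c]]) (use N(1) in auto)
qed

lemma integrable_if_square_integrable_Icc:
  fixes G :: "real \<Rightarrow> complex"
  assumes [measurable]: "G \<in> borel_measurable borel"
    and sq: "integrable lborel (\<lambda>x. (cmod (G x))\<^sup>2)" and support: "\<And>x. x \<notin> {a..b} \<Longrightarrow> G x = 0"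
  shows "integrable lborel G"
proof (rule Bochner_Integration.integrable_bound[where f="\<lambda>x. indicator {a..b} x + (cmod (G x))\<^sup>2"])
  show "integrable lborel (\<lambda>x. indicator {a..b} x + (cmod (G x))\<^sup>2 :: real)"
    using sq by (intro Bochner_Integration.integrable_add integrable_real_indicator)
      (auto simp: emeasure_lborel_Icc_eq)
  have "norm (G x) \<le> indicator {a..b} x + (norm (G x))\<^sup>2" for x
  proof (cases "x \<in> {a..b}")
    case True
    then show ?thesis
      using zero_le_power2[of "norm (G x) - 1/2"] by (simp add: power2_eq_square algebra_simps)
  qed (simp add: support)
  then show "AE x in lborel. norm (G x) \<le> norm (indicator {a..b} x + (cmod (G x))\<^sup>2 :: real)"
    by simp
qed simp

lemma square_integrable_on_Icc_borel_repr:
  fixes F :: "real \<Rightarrow> complex"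
  assumes "square_integrable_on F {a..b}"
  obtains G where "integrable lborel G" "\<And>x. x \<notin> {a..b} \<Longrightarrow> G x = 0"
    "AE x in lborel. indicator {a..b} x *\<^sub>R F x = G x"
proof -
  define S where "S = {a..b}"
  have m: "(\<lambda>x. indicator S x *\<^sub>R F x) \<in> borel_measurable lebesgue"
    using assms unfolding square_integrable_on_def set_borel_measurable_def S_def by simp
  obtain G0 where G0: "G0 \<in> borel_measurable borel" "AE x in lborel. indicator S x *\<^sub>R F x = G0 x"
    using AE_eq_borel_if_lebesgue_measurable[OF m] by blast
  note G0(1)[measurable]
  define G where "G x = indicator S x *\<^sub>R G0 x" for x
  have G_meas[measurable]: "G \<in> borel_measurable borel" unfolding G_def S_def by measurable
  have G_ae: "AE x in lborel. indicator S x *\<^sub>R F x = G x"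
    using G0(2) by eventually_elim (auto simp: G_def indicator_def)
  have "(\<lambda>x. (cmod (indicator S x *\<^sub>R F x))\<^sup>2) = (\<lambda>x. indicator S x *\<^sub>R (cmod (F x))\<^sup>2)"
    by (auto simp: indicator_def)
  then have "integrable lebesgue (\<lambda>x. (cmod (indicator S x *\<^sub>R F x))\<^sup>2)"
    using assms by (simp add: square_integrable_on_def set_integrable_def S_def)
  moreover have "integrable lebesgue (\<lambda>x. (cmod (indicator S x *\<^sub>R F x))\<^sup>2)
      = integrable lebesgue (\<lambda>x. (cmod (G x))\<^sup>2)"
  proof (rule integrable_cong_AE)
    show "(\<lambda>x. (cmod (indicator S x *\<^sub>R F x))\<^sup>2) \<in> borel_measurable lebesgue"
      using m by measurable
    show "(\<lambda>x. (cmod (G x))\<^sup>2) \<in> borel_measurable lebesgue"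
      by (intro measurable_completion) measurable
    show "AE x in lebesgue. (cmod (indicator S x *\<^sub>R F x))\<^sup>2 = (cmod (G x))\<^sup>2"
      unfolding AE_completion_iff using G_ae by eventually_elim simp
  qed
  ultimately have "integrable lborel (\<lambda>x. (cmod (G x))\<^sup>2)"
    by (subst (asm) integrable_completion) measurable
  then have "integrable lborel G"
    by (rule integrable_if_square_integrable_Icc[where a=a and b=b, OF G_meas]) (simp add: G_def S_def)
  then show ?thesis
    using that G_ae by (auto simp: G_def S_def)
qed

lemma paley_wiener_exp_transform:
  assumes "f \<in> paley_wiener B"
  obtains F where "integrable lborel F" "\<And>\<xi>. \<bar>\<xi>\<bar> > B \<Longrightarrow> F \<xi> = 0"
    "f = exp_transform (complex_of_real (2 * pi) * \<i>) F"
proof -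
  obtain F0 where sq: "square_integrable_on F0 {-B..B}"
    and f: "\<And>z. f z = (LINT \<xi>:{-B..B}|lebesgue. F0 \<xi> * exp (2 * pi * \<i> * complex_of_real \<xi> * z))"
    using assms by (auto simp: paley_wiener_def)
  obtain F where F: "integrable lborel F" "\<And>\<xi>. \<xi> \<notin> {-B..B} \<Longrightarrow> F \<xi> = 0"
    and ae: "AE \<xi> in lborel. indicator {-B..B} \<xi> *\<^sub>R F0 \<xi> = F \<xi>"
    using square_integrable_on_Icc_borel_repr[OF sq] by blast
  have [measurable]: "F \<in> borel_measurable borel" using F(1) by auto
  have F0_meas: "(\<lambda>\<xi>. indicator {-B..B} \<xi> *\<^sub>R F0 \<xi>) \<in> borel_measurable lebesgue"
    using sq by (simp add: square_integrable_on_def set_borel_measurable_def)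
  have "f z = exp_transform (complex_of_real (2 * pi) * \<i>) F z" for z
  proof -
    let ?e = "\<lambda>\<xi>. exp (complex_of_real (2 * pi) * \<i> * complex_of_real \<xi> * z)"
    have e_meas: "?e \<in> borel_measurable lebesgue"
      by (intro measurable_completion) measurable
    have "f z = (LINT \<xi>|lebesgue. (indicator {-B..B} \<xi> *\<^sub>R F0 \<xi>) * ?e \<xi>)"
      unfolding f set_lebesgue_integral_def
      by (intro Bochner_Integration.integral_cong refl) (simp add: indicator_def)
    also have "\<dots> = (LINT \<xi>|lebesgue. F \<xi> * ?e \<xi>)"
    proof (rule integral_cong_AE)
      show "(\<lambda>\<xi>. (indicator {-B..B} \<xi> *\<^sub>R F0 \<xi>) * ?e \<xi>) \<in> borel_measurable lebesgue"
        using F0_meas e_meas by measurable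
      show "(\<lambda>\<xi>. F \<xi> * ?e \<xi>) \<in> borel_measurable lebesgue"
        by (intro measurable_completion) measurable
      show "AE \<xi> in lebesgue. (indicator {-B..B} \<xi> *\<^sub>R F0 \<xi>) * ?e \<xi> = F \<xi> * ?e \<xi>"
        unfolding AE_completion_iff using ae by eventually_elim simp
    qed
    also have "\<dots> = exp_transform (complex_of_real (2 * pi) * \<i>) F z"
      unfolding exp_transform_def by (intro integral_completion) measurable
    finally show ?thesis .
  qed
  moreover have "F \<xi> = 0" if "\<bar>\<xi>\<bar> > B" for \<xi>
    using that by (intro F(2)) auto
  ultimately show ?thesis
    by (intro that[OF F(1)]) (auto simp: fun_eq_iff)
qed

lemma compactly_supported_window_repr:
  assumes sq: "square_integrable_on \<phi> UNIV" and "compactly_supported \<phi>"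
    and nz: "\<not> (AE t in lebesgue. \<phi> t = 0)"
  obtains \<psi> R where "integrable lborel \<psi>" "\<And>t. \<bar>t\<bar> > R \<Longrightarrow> \<psi> t = 0"
    "\<not> (AE t in lborel. \<psi> t = 0)" "AE t in lborel. \<phi> t = \<psi> t"
proof -
  obtain R where R: "AE t in lebesgue. \<bar>t\<bar> > R \<longrightarrow> \<phi> t = 0"
    using assms(2) by (auto simp: compactly_supported_def)
  have [measurable]: "\<phi> \<in> borel_measurable lebesgue"
    and "integrable lebesgue (\<lambda>x. (cmod (\<phi> x))\<^sup>2)"
    using sq by (simp_all add: square_integrable_on_def set_borel_measurable_def set_integrable_def)
  then have "integrable lebesgue (\<lambda>x. indicator {-R..R} x *\<^sub>R (cmod (\<phi> x))\<^sup>2)"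
    by (intro integrable_mult_indicator) auto
  then have "square_integrable_on \<phi> {-R..R}"
    unfolding square_integrable_on_def set_borel_measurable_def set_integrable_def
    by (auto intro!: borel_measurable_scaleR borel_measurable_indicator)
  then obtain \<psi> where \<psi>: "integrable lborel \<psi>" "\<And>t. t \<notin> {-R..R} \<Longrightarrow> \<psi> t = 0"
    and ae: "AE t in lborel. indicator {-R..R} t *\<^sub>R \<phi> t = \<psi> t"
    using square_integrable_on_Icc_borel_repr by blast
  have "AE t in lborel. \<phi> t = \<psi> t"
    using ae R[unfolded AE_completion_iff] by eventually_elim (auto simp: indicator_def abs_le_iff not_less)
  moreover have "\<not> (AE t in lborel. \<psi> t = 0)"
  proof
    assume "AE t in lborel. \<psi> t = 0"
    with \<open>AE t in lborel. \<phi> t = \<psi> t\<close> have "AE t in lborel. \<phi> t = 0" by eventually_elim simp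
    with nz show False by (simp add: AE_completion_iff)
  qed
  moreover have "\<psi> t = 0" if "\<bar>t\<bar> > R" for t
    using that by (intro \<psi>(2)) auto
  ultimately show ?thesis using that \<psi>(1) by blast
qed

subsection \<open>The STFT as a Fourier transform\<close>

definition windowed :: "(real \<Rightarrow> complex) \<Rightarrow> (real \<Rightarrow> complex) \<Rightarrow> real \<Rightarrow> real \<Rightarrow> complex" where
  "windowed h \<phi> x t = h t * cnj (\<phi> (t - x))"

lemma stft_eq_fourier_windowed:
  assumes ae: "AE t in lborel. \<phi> t = \<psi> t"
    and [measurable]: "\<psi> \<in> borel_measurable borel" "h \<in> borel_measurable borel"
  shows "stft \<phi> h x \<omega> = fourier (windowed h \<psi> x) \<omega>"
proof -
  define k where "k \<phi> t = h t * cnj (\<phi> (t - x)) * exp (- 2 * pi * \<i> * complex_of_real t * complex_of_real \<omega>)"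
    for \<phi> :: "real \<Rightarrow> complex" and t
  have k_meas: "k \<psi> \<in> borel_measurable lborel" unfolding k_def[abs_def] by measurable
  have "AE t in lborel. k \<psi> t = k \<phi> t"
    using AE_lborel_shift[OF ae, of x] by eventually_elim (simp add: k_def)
  then have k_ae: "AE t in lebesgue. k \<psi> t = k \<phi> t"
    by (simp add: AE_completion_iff)
  have "stft \<phi> h x \<omega> = (LINT t|lebesgue. k \<psi> t)"
    unfolding stft_def k_def[symmetric]
    by (rule integral_cong_AE[OF borel_measurable_AE[OF measurable_completion[OF k_meas] k_ae]
          measurable_completion[OF k_meas]])
       (use k_ae in \<open>simp add: eq_commute\<close>)
  also have "\<dots> = (LBINT t. k \<psi> t)"
    by (rule integral_completion[OF k_meas])
  also have "\<dots> = fourier (windowed h \<psi> x) \<omega>"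
    unfolding fourier_def windowed_def fourier_kernel_def k_def by simp
  finally show ?thesis .
qed

lemma stft_cmult: "stft \<phi> (\<lambda>t. c * h t) x \<omega> = c * stft \<phi> h x \<omega>"
  unfolding stft_def by (simp add: mult.assoc)

lemma integrable_windowed:
  assumes "integrable lborel \<phi>" "h \<in> borel_measurable borel" "\<And>t. norm (h t) \<le> C"
  shows "integrable lborel (windowed h \<phi> x)"
proof -
  have "integrable lborel (\<lambda>t. cnj (\<phi> (t - x)))"
    using assms(1) lborel_integrable_real_affine_iff[of 1 \<phi> "- x"] by simp
  then show ?thesis
    unfolding windowed_def[abs_def] by (rule integrable_mult_bounded[OF _ assms(2,3)])
qed

lemma integrable_product_shift_bounded:
  fixes a b :: "real \<Rightarrow> complex" and k :: "real \<Rightarrow> real \<Rightarrow> complex"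
  assumes a: "integrable lborel a" and b: "integrable lborel b"
    and [measurable]: "(\<lambda>(x, y). k x y) \<in> borel_measurable (lborel \<Otimes>\<^sub>M lborel)"
    and k: "\<And>x y. norm (k x y) \<le> C"
  shows "integrable (lborel \<Otimes>\<^sub>M lborel) (\<lambda>(x, y). a x * b (x - y) * k x y)"
proof (rule integrableI_bounded)
  have [measurable]: "a \<in> borel_measurable borel" "b \<in> borel_measurable borel" using a b by auto
  show m: "(\<lambda>(x, y). a x * b (x - y) * k x y) \<in> borel_measurable (lborel \<Otimes>\<^sub>M lborel)" by measurable
  have C: "0 \<le> C" using k[of 0 0] norm_ge_zero order_trans by blast
  have "(\<integral>\<^sup>+ p. ennreal (norm ((\<lambda>(x, y). a x * b (x - y) * k x y) p)) \<partial>(lborel \<Otimes>\<^sub>M lborel))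
      = (\<integral>\<^sup>+ x. \<integral>\<^sup>+ y. ennreal (norm (a x * b (x - y) * k x y)) \<partial>lborel \<partial>lborel)"
    by (subst lborel.nn_integral_fst[symmetric]) (use m in \<open>auto simp: case_prod_beta\<close>)
  also have "\<dots> \<le> (\<integral>\<^sup>+ x. \<integral>\<^sup>+ y. ennreal (norm (a x)) * ennreal (norm (b (x - y))) * ennreal C \<partial>lborel \<partial>lborel)"
    using k C by (intro nn_integral_mono) (simp add: norm_mult mult_left_mono ennreal_mult[symmetric])
  also have "\<dots> = (\<integral>\<^sup>+ x. ennreal (norm (a x)) * ((\<integral>\<^sup>+ y. ennreal (norm (b y)) \<partial>lborel) * ennreal C) \<partial>lborel)"
  proof (intro nn_integral_cong)
    fix x
    have "(\<integral>\<^sup>+ y. ennreal (norm (b (x - y))) \<partial>lborel) = (\<integral>\<^sup>+ y. ennreal (norm (b y)) \<partial>lborel)"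
      using nn_integral_real_affine[of "\<lambda>y. ennreal (norm (b y))" "-1" x] by simp
    then show "(\<integral>\<^sup>+ y. ennreal (norm (a x)) * ennreal (norm (b (x - y))) * ennreal C \<partial>lborel)
        = ennreal (norm (a x)) * ((\<integral>\<^sup>+ y. ennreal (norm (b y)) \<partial>lborel) * ennreal C)"
      by (simp add: nn_integral_cmult nn_integral_multc mult.assoc)
  qed
  also have "\<dots> < \<infinity>"
    using a b unfolding integrable_iff_bounded by (simp add: nn_integral_multc ennreal_mult_less_top)
  finally show "(\<integral>\<^sup>+ p. ennreal (norm ((\<lambda>(x, y). a x * b (x - y) * k x y) p)) \<partial>(lborel \<Otimes>\<^sub>M lborel)) < \<infinity>" .
qed

lemma integrable_product_bounded:
  fixes a b :: "real \<Rightarrow> complex" and k :: "real \<Rightarrow> real \<Rightarrow> complex"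
  assumes a: "integrable lborel a" and b: "integrable lborel b"
    and [measurable]: "(\<lambda>(x, y). k x y) \<in> borel_measurable (lborel \<Otimes>\<^sub>M lborel)"
    and k: "\<And>x y. norm (k x y) \<le> C"
  shows "integrable (lborel \<Otimes>\<^sub>M lborel) (\<lambda>(x, y). a x * b y * k x y)"
proof (rule integrableI_bounded)
  have [measurable]: "a \<in> borel_measurable borel" "b \<in> borel_measurable borel" using a b by auto
  show m: "(\<lambda>(x, y). a x * b y * k x y) \<in> borel_measurable (lborel \<Otimes>\<^sub>M lborel)" by measurable
  have C: "0 \<le> C" using k[of 0 0] norm_ge_zero order_trans by blast
  have "(\<integral>\<^sup>+ p. ennreal (norm ((\<lambda>(x, y). a x * b y * k x y) p)) \<partial>(lborel \<Otimes>\<^sub>M lborel))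
      = (\<integral>\<^sup>+ x. \<integral>\<^sup>+ y. ennreal (norm (a x * b y * k x y)) \<partial>lborel \<partial>lborel)"
    by (subst lborel.nn_integral_fst[symmetric]) (use m in \<open>auto simp: case_prod_beta\<close>)
  also have "\<dots> \<le> (\<integral>\<^sup>+ x. \<integral>\<^sup>+ y. ennreal (norm (a x)) * ennreal (norm (b y)) * ennreal C \<partial>lborel \<partial>lborel)"
    using k C by (intro nn_integral_mono) (simp add: norm_mult mult_left_mono ennreal_mult[symmetric])
  also have "\<dots> = (\<integral>\<^sup>+ x. ennreal (norm (a x)) \<partial>lborel) * ((\<integral>\<^sup>+ y. ennreal (norm (b y)) \<partial>lborel) * ennreal C)"
    by (simp add: nn_integral_cmult nn_integral_multc mult.assoc)
  also have "\<dots> < \<infinity>"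
    using a b unfolding integrable_iff_bounded by (simp add: ennreal_mult_less_top)
  finally show "(\<integral>\<^sup>+ p. ennreal (norm ((\<lambda>(x, y). a x * b y * k x y) p)) \<partial>(lborel \<Otimes>\<^sub>M lborel)) < \<infinity>" .
qed

subsection \<open>Autocorrelation\<close>

definition autocorrelation :: "(real \<Rightarrow> complex) \<Rightarrow> real \<Rightarrow> complex" where
  "autocorrelation h s = (LBINT t. h t * cnj (h (t - s)))"

lemma integrable_autocorrelation:
  assumes h: "integrable lborel h"
  shows "integrable lborel (autocorrelation h)"
proof -
  have [measurable]: "h \<in> borel_measurable borel" using h by auto
  have "integrable (lborel \<Otimes>\<^sub>M lborel) (\<lambda>(x, y). h x * cnj (h (x - y)) * 1)"
    by (rule integrable_product_shift_bounded[where C=1]) (use h in auto)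
  from lborel_pair.integrable_fst[OF lborel_pair.integrable_product_swap[OF this]]
  show ?thesis by (simp add: autocorrelation_def[abs_def] case_prod_beta)
qed

lemma fourier_autocorrelation:
  assumes h: "integrable lborel h"
  shows "fourier (autocorrelation h) \<omega> = (cmod (fourier h \<omega>))\<^sup>2"
proof -
  have [measurable]: "h \<in> borel_measurable borel" using h by auto
  have cnj_fourier: "cnj (fourier h \<omega>) = (LBINT s. cnj (h (t - s)) * fourier_kernel (s - t) \<omega>)" for t
  proof -
    have "cnj (fourier h \<omega>) = (LBINT u. cnj (h u) * fourier_kernel (- u) \<omega>)"
      unfolding fourier_def by (subst Bochner_Integration.integral_cnj[symmetric]) (simp add: cnj_fourier_kernel)
    then show ?thesis
      using lborel_integral_real_affine[of "-1" "\<lambda>u. cnj (h u) * fourier_kernel (- u) \<omega>" t] by simp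
  qed
  have int: "integrable (lborel \<Otimes>\<^sub>M lborel) (\<lambda>(t, s). h t * cnj (h (t - s)) * fourier_kernel s \<omega>)"
    by (rule integrable_product_shift_bounded[where C=1]) (use h in auto)
  have "complex_of_real ((cmod (fourier h \<omega>))\<^sup>2) = (LBINT t. h t * fourier_kernel t \<omega> * cnj (fourier h \<omega>))"
    unfolding complex_norm_square by (simp add: fourier_def)
  also have "\<dots> = (LBINT t. LBINT s. h t * cnj (h (t - s)) * fourier_kernel s \<omega>)"
  proof (intro Bochner_Integration.integral_cong refl)
    fix t
    have "fourier_kernel t \<omega> * fourier_kernel (s - t) \<omega> = fourier_kernel s \<omega>" for s
      by (simp add: fourier_kernel_add)
    then show "h t * fourier_kernel t \<omega> * cnj (fourier h \<omega>) = (LBINT s. h t * cnj (h (t - s)) * fourier_kernel s \<omega>)"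
      unfolding cnj_fourier[of t] by (simp flip: integral_mult_right_zero) (metis mult.assoc mult.left_commute)
  qed
  also have "\<dots> = (LBINT s. LBINT t. h t * cnj (h (t - s)) * fourier_kernel s \<omega>)"
    using lborel_pair.Fubini_integral[OF int] by simp
  also have "\<dots> = fourier (autocorrelation h) \<omega>"
    by (simp add: fourier_def autocorrelation_def)
  finally show ?thesis by simp
qed

lemma AE_autocorrelation_eq_if_norm_fourier_eq:
  assumes h: "integrable lborel h" and k: "integrable lborel k"
    and eq: "\<And>\<omega>. cmod (fourier h \<omega>) = cmod (fourier k \<omega>)"
  shows "AE s in lborel. autocorrelation h s = autocorrelation k s"
proof -
  have "AE s in lborel. autocorrelation h s - autocorrelation k s = 0"
  proof (rule fourier_uniqueness)
    show "integrable lborel (\<lambda>s. autocorrelation h s - autocorrelation k s)"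
      using h k by (simp add: integrable_autocorrelation)
    show "fourier (\<lambda>s. autocorrelation h s - autocorrelation k s) \<omega> = 0" for \<omega>
      using h k eq[of \<omega>] by (simp add: fourier_diff integrable_autocorrelation fourier_autocorrelation)
  qed
  then show ?thesis by simp
qed

definition window_product :: "(real \<Rightarrow> complex) \<Rightarrow> real \<Rightarrow> real \<Rightarrow> complex" where
  "window_product \<phi> s u = cnj (\<phi> u) * \<phi> (u - s)"

lemma borel_measurable_window_product[measurable]:
  assumes [measurable]: "\<phi> \<in> borel_measurable borel"
  shows "window_product \<phi> s \<in> borel_measurable borel"
  unfolding window_product_def[abs_def] by measurable

lemma autocorrelation_windowed:
  "autocorrelation (windowed h \<phi> x) s = (LBINT t. h t * cnj (h (t - s)) * window_product \<phi> s (t - x))"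
  unfolding autocorrelation_def windowed_def window_product_def
  by (intro Bochner_Integration.integral_cong refl) (simp add: algebra_simps)

lemma AE_integrable_window_product:
  assumes \<phi>: "integrable lborel \<phi>"
  shows "AE s in lborel. integrable lborel (window_product \<phi> s)"
proof -
  have [measurable]: "\<phi> \<in> borel_measurable borel" using \<phi> by auto
  have "integrable (lborel \<Otimes>\<^sub>M lborel) (\<lambda>(u, s). cnj (\<phi> u) * \<phi> (u - s) * 1)"
    by (rule integrable_product_shift_bounded[where C=1]) (use \<phi> in auto)
  from lborel_pair.AE_integrable_fst[OF lborel_pair.integrable_product_swap[OF this]]
  show ?thesis by (simp add: window_product_def[abs_def] case_prod_beta)
qed

text \<open>By Tonelli, the window products have total \<open>L\<^sup>1\<close> mass \<open>\<parallel>\<phi>\<parallel>\<^sub>1\<^sup>2 > 0\<close>.\<close>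
lemma not_AE_AE_window_product_zero:
  assumes \<phi>: "integrable lborel \<phi>" and nz: "\<not> (AE t in lborel. \<phi> t = 0)"
  shows "\<not> (AE s in lborel. AE u in lborel. window_product \<phi> s u = 0)"
proof
  assume ae: "AE s in lborel. AE u in lborel. window_product \<phi> s u = 0"
  have [measurable]: "\<phi> \<in> borel_measurable borel" using \<phi> by auto
  define N where "N = (\<integral>\<^sup>+ u. ennreal (norm (\<phi> u)) \<partial>lborel)"
  have "AE s in lborel. (\<integral>\<^sup>+ u. ennreal (norm (window_product \<phi> s u)) \<partial>lborel) = 0"
    using ae by eventually_elim (subst nn_integral_0_iff_AE, auto elim: AE_mp)
  then have "(\<integral>\<^sup>+ s. \<integral>\<^sup>+ u. ennreal (norm (window_product \<phi> s u)) \<partial>lborel \<partial>lborel) = (\<integral>\<^sup>+ s. 0 \<partial>(lborel :: real measure))"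
    by (rule nn_integral_cong_AE)
  then have "0 = (\<integral>\<^sup>+ s. \<integral>\<^sup>+ u. ennreal (norm (window_product \<phi> s u)) \<partial>lborel \<partial>lborel)"
    by simp
  also have "\<dots> = (\<integral>\<^sup>+ u. \<integral>\<^sup>+ s. ennreal (norm (window_product \<phi> s u)) \<partial>lborel \<partial>lborel)"
    by (rule lborel_pair.Fubini') (simp add: window_product_def)
  also have "\<dots> = (\<integral>\<^sup>+ u. ennreal (norm (\<phi> u)) * N \<partial>lborel)"
  proof (intro nn_integral_cong)
    fix u
    have "(\<integral>\<^sup>+ s. ennreal (norm (\<phi> (u - s))) \<partial>lborel) = N"
      unfolding N_def using nn_integral_real_affine[of "\<lambda>y. ennreal (norm (\<phi> y))" "-1" u] by simp
    then show "(\<integral>\<^sup>+ s. ennreal (norm (window_product \<phi> s u)) \<partial>lborel) = ennreal (norm (\<phi> u)) * N"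
      by (simp add: window_product_def norm_mult ennreal_mult nn_integral_cmult)
  qed
  also have "\<dots> = N * N" unfolding N_def by (simp add: nn_integral_multc)
  finally have "N = 0" by simp
  then have "AE u in lborel. \<phi> u = 0"
    unfolding N_def by (subst (asm) nn_integral_0_iff_AE) auto
  with nz show False by simp
qed

subsection \<open>Deconvolution by a compactly supported window\<close>

lemma countable_zeros_fourier_compact_support:
  assumes W: "integrable lborel W" and support: "\<And>u. \<bar>u\<bar> > M \<Longrightarrow> W u = 0"
    and nz: "\<not> (AE u in lborel. W u = 0)"
  shows "countable {\<nu>. fourier W \<nu> = 0}"
proof -
  define H where "H = exp_transform (- complex_of_real (2 * pi) * \<i>) W"
  have H: "fourier W \<nu> = H (complex_of_real \<nu>)" for \<nu>
    unfolding H_def exp_transform_def fourier_def fourier_kernel_def by (simp add: mult_ac)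
  obtain \<nu>0 where "fourier W \<nu>0 \<noteq> 0"
    using fourier_uniqueness[OF W] nz by blast
  then show ?thesis
    unfolding H using countable_real_zeros_of_entire exp_transform_holomorphic[OF W support]
    by (simp add: H_def H)
qed

lemma integral_inverse_fourier_mult_shift:
  assumes \<Delta>: "integrable lborel \<Delta>" and W: "integrable lborel W"
  shows "(LBINT t. (LBINT \<nu>. \<Delta> \<nu> * fourier_kernel \<nu> (- t)) * W (t - x))
       = fourier (\<lambda>\<nu>. \<Delta> \<nu> * fourier W (- \<nu>)) (- x)"
proof -
  have [measurable]: "\<Delta> \<in> borel_measurable borel" "W \<in> borel_measurable borel" using \<Delta> W by auto
  have Wx: "integrable lborel (\<lambda>t. W (t - x))"
    using lborel_integrable_real_affine_iff[of 1 W "- x"] W by simp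
  have "(\<lambda>(t, \<nu>). fourier_kernel \<nu> (- t)) \<in> borel_measurable (lborel \<Otimes>\<^sub>M lborel)"
    by (simp add: case_prod_beta')
  then have int: "integrable (lborel \<Otimes>\<^sub>M lborel) (\<lambda>(t, \<nu>). W (t - x) * \<Delta> \<nu> * fourier_kernel \<nu> (- t))"
    by (rule integrable_product_bounded[OF Wx \<Delta>, where C=1]) simp
  have "(LBINT t. (LBINT \<nu>. \<Delta> \<nu> * fourier_kernel \<nu> (- t)) * W (t - x))
      = (LBINT t. LBINT \<nu>. W (t - x) * \<Delta> \<nu> * fourier_kernel \<nu> (- t))"
  proof (intro Bochner_Integration.integral_cong refl)
    fix t
    have "(LBINT \<nu>. \<Delta> \<nu> * fourier_kernel \<nu> (- t)) * W (t - x)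
        = (LBINT \<nu>. \<Delta> \<nu> * fourier_kernel \<nu> (- t) * W (t - x))"
      by (rule integral_mult_left_zero[symmetric])
    then show "(LBINT \<nu>. \<Delta> \<nu> * fourier_kernel \<nu> (- t)) * W (t - x)
        = (LBINT \<nu>. W (t - x) * \<Delta> \<nu> * fourier_kernel \<nu> (- t))"
      by (simp add: mult_ac)
  qed
  also have "\<dots> = (LBINT \<nu>. LBINT t. W (t - x) * \<Delta> \<nu> * fourier_kernel \<nu> (- t))"
    using lborel_pair.Fubini_integral[OF int] by simp
  also have "\<dots> = (LBINT \<nu>. \<Delta> \<nu> * fourier W (- \<nu>) * fourier_kernel \<nu> (- x))"
  proof (intro Bochner_Integration.integral_cong refl)
    fix \<nu>
    have kernel: "fourier_kernel \<nu> (- (x + u)) = fourier_kernel \<nu> (- x) * fourier_kernel u (- \<nu>)" for u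
      by (simp add: fourier_kernel_def exp_add[symmetric] algebra_simps)
    have "(LBINT t. W (t - x) * \<Delta> \<nu> * fourier_kernel \<nu> (- t))
        = (LBINT u. W u * \<Delta> \<nu> * fourier_kernel \<nu> (- (x + u)))"
      using lborel_integral_real_affine[of 1 "\<lambda>t. W (t - x) * \<Delta> \<nu> * fourier_kernel \<nu> (- t)" x] by simp
    also have "\<dots> = (LBINT u. \<Delta> \<nu> * fourier_kernel \<nu> (- x) * (W u * fourier_kernel u (- \<nu>)))"
      unfolding kernel by (simp add: mult_ac)
    also have "\<dots> = \<Delta> \<nu> * fourier W (- \<nu>) * fourier_kernel \<nu> (- x)"
      unfolding fourier_def by (subst integral_mult_right_zero) (simp add: mult_ac)
    finally show "(LBINT t. W (t - x) * \<Delta> \<nu> * fourier_kernel \<nu> (- t))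
        = \<Delta> \<nu> * fourier W (- \<nu>) * fourier_kernel \<nu> (- x)" .
  qed
  finally show ?thesis by (simp add: fourier_def)
qed

lemma AE_zero_if_window_smoothing_zero:
  fixes \<Delta> W :: "real \<Rightarrow> complex"
  assumes \<Delta>: "integrable lborel \<Delta>" and W: "integrable lborel W"
    and support: "\<And>u. \<bar>u\<bar> > M \<Longrightarrow> W u = 0" and nz: "\<not> (AE u in lborel. W u = 0)"
    and zero: "\<And>x. (LBINT t. (LBINT \<nu>. \<Delta> \<nu> * fourier_kernel \<nu> (- t)) * W (t - x)) = 0"
  shows "AE \<nu> in lborel. \<Delta> \<nu> = 0"
proof -
  have "continuous_on UNIV (\<lambda>\<nu>. fourier W (- \<nu>))"
    by (intro continuous_on_compose2[OF continuous_fourier[OF W]] continuous_intros) auto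
  then have "integrable lborel (\<lambda>\<nu>. fourier W (- \<nu>) * \<Delta> \<nu>)"
    by (rule integrable_mult_bounded[OF \<Delta> borel_measurable_continuous_onI norm_fourier_le])
  then have "AE \<nu> in lborel. \<Delta> \<nu> * fourier W (- \<nu>) = 0"
  proof (rule fourier_uniqueness[OF back_subst[of "integrable lborel"]])
    show "fourier (\<lambda>\<nu>. \<Delta> \<nu> * fourier W (- \<nu>)) \<omega> = 0" for \<omega>
      using zero[of "- \<omega>"] integral_inverse_fourier_mult_shift[OF \<Delta> W, of "- \<omega>"] by simp
  qed (simp add: mult.commute)
  moreover have "AE \<nu> in lborel. fourier W (- \<nu>) \<noteq> 0"
  proof (rule AE_I')
    have "{\<nu>. fourier W (- \<nu>) = 0} = uminus ` {\<nu>. fourier W \<nu> = 0}"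
      by (rule set_eqI) (metis (mono_tags) image_iff mem_Collect_eq minus_minus)
    then show "{\<nu>. fourier W (- \<nu>) = 0} \<in> null_sets lborel"
      using countable_zeros_fourier_compact_support[OF W support nz]
      by (simp add: countable_imp_null_set_lborel)
  qed auto
  ultimately show ?thesis by eventually_elim simp
qed

subsection \<open>Band-limited functions\<close>

locale band_limited =
  fixes F :: "real \<Rightarrow> complex" and B :: real
  assumes integrable_spectrum: "integrable lborel F"
    and spectrum_support: "\<And>\<xi>. \<bar>\<xi>\<bar> > B \<Longrightarrow> F \<xi> = 0"
begin

lemma borel_measurable_spectrum[measurable]: "F \<in> borel_measurable borel"
  using integrable_spectrum by auto

lemma holomorphic_exp_transform: "exp_transform c F holomorphic_on UNIV"
  by (rule exp_transform_holomorphic[OF integrable_spectrum spectrum_support])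

definition trace :: "real \<Rightarrow> complex" where
  "trace t = exp_transform (complex_of_real (2 * pi) * \<i>) F (complex_of_real t)"

lemma trace_eq_fourier: "trace t = fourier F (- t)"
  unfolding trace_def exp_transform_def fourier_def fourier_kernel_def by (simp add: mult_ac)

lemma continuous_trace: "continuous_on UNIV trace"
  unfolding trace_eq_fourier[abs_def]
  by (intro continuous_on_compose2[OF continuous_fourier[OF integrable_spectrum]] continuous_intros) auto

lemma borel_measurable_trace[measurable]: "trace \<in> borel_measurable borel"
  by (rule borel_measurable_continuous_onI[OF continuous_trace])

lemma norm_trace_le: "norm (trace t) \<le> (LBINT \<xi>. norm (F \<xi>))"
  unfolding trace_eq_fourier by (rule norm_fourier_le)

definition shift_product :: "real \<Rightarrow> real \<Rightarrow> complex" where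
  "shift_product s t = trace t * cnj (trace (t - s))"

lemma norm_shift_product_le: "norm (shift_product s t) \<le> (LBINT \<xi>. norm (F \<xi>))\<^sup>2"
  unfolding shift_product_def norm_mult complex_mod_cnj power2_eq_square
  by (intro mult_mono norm_trace_le) auto

lemma continuous_shift_product: "continuous_on UNIV (shift_product s)"
  unfolding shift_product_def[abs_def]
  by (intro continuous_intros continuous_on_compose2[OF continuous_trace]) auto

definition shift_product_spectrum :: "real \<Rightarrow> real \<Rightarrow> complex" where
  "shift_product_spectrum s \<nu> = (LBINT \<xi>. F \<xi> * cnj (F (\<xi> - \<nu>)) * fourier_kernel (\<xi> - \<nu>) (- s))"

lemma integrable_shift_product_spectrum: "integrable lborel (shift_product_spectrum s)"
proof -
  have "integrable (lborel \<Otimes>\<^sub>M lborel) (\<lambda>(\<xi>, \<nu>). F \<xi> * cnj (F (\<xi> - \<nu>)) * fourier_kernel (\<xi> - \<nu>) (- s))"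
    by (rule integrable_product_shift_bounded[where C=1]) (use integrable_spectrum in auto)
  from lborel_pair.integrable_fst[OF lborel_pair.integrable_product_swap[OF this]]
  show ?thesis by (simp add: shift_product_spectrum_def[abs_def] case_prod_beta)
qed

lemma shift_product_eq_inverse_fourier:
  "shift_product s t = (LBINT \<nu>. shift_product_spectrum s \<nu> * fourier_kernel \<nu> (- t))"
proof -
  have int: "integrable (lborel \<Otimes>\<^sub>M lborel)
      (\<lambda>(\<xi>, \<nu>). F \<xi> * cnj (F (\<xi> - \<nu>)) * (fourier_kernel (\<xi> - \<nu>) (- s) * fourier_kernel \<nu> (- t)))"
    by (rule integrable_product_shift_bounded[where C=1]) (use integrable_spectrum in \<open>auto simp: norm_mult\<close>)
  have cnj_trace: "cnj (trace (t - s)) = (LBINT \<nu>. cnj (F (\<xi> - \<nu>)) * fourier_kernel (\<xi> - \<nu>) (t - s))" for \<xi>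
  proof -
    have "cnj (trace (t - s)) = (LBINT \<eta>. cnj (F \<eta>) * fourier_kernel \<eta> (t - s))"
      unfolding trace_eq_fourier fourier_def
      by (subst Bochner_Integration.integral_cnj[symmetric]) (simp add: cnj_fourier_kernel fourier_kernel_minus)
    then show ?thesis
      using lborel_integral_real_affine[of "-1" "\<lambda>\<eta>. cnj (F \<eta>) * fourier_kernel \<eta> (t - s)" \<xi>] by simp
  qed
  have kernel: "fourier_kernel \<xi> (- t) * fourier_kernel (\<xi> - \<nu>) (t - s)
      = fourier_kernel (\<xi> - \<nu>) (- s) * fourier_kernel \<nu> (- t)" for \<xi> \<nu>
    unfolding fourier_kernel_def by (simp add: exp_add[symmetric] algebra_simps)
  have "shift_product s t = (LBINT \<xi>. F \<xi> * fourier_kernel \<xi> (- t) * cnj (trace (t - s)))"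
    unfolding shift_product_def trace_eq_fourier[of t] fourier_def by simp
  also have "\<dots> = (LBINT \<xi>. LBINT \<nu>. F \<xi> * cnj (F (\<xi> - \<nu>)) * (fourier_kernel (\<xi> - \<nu>) (- s) * fourier_kernel \<nu> (- t)))"
  proof (intro Bochner_Integration.integral_cong refl)
    fix \<xi>
    have "F \<xi> * fourier_kernel \<xi> (- t) * cnj (trace (t - s))
        = (LBINT \<nu>. F \<xi> * fourier_kernel \<xi> (- t) * (cnj (F (\<xi> - \<nu>)) * fourier_kernel (\<xi> - \<nu>) (t - s)))"
      unfolding cnj_trace[of \<xi>] by (rule integral_mult_right_zero[symmetric])
    also have "\<dots> = (LBINT \<nu>. F \<xi> * cnj (F (\<xi> - \<nu>)) * (fourier_kernel (\<xi> - \<nu>) (- s) * fourier_kernel \<nu> (- t)))"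
      by (intro Bochner_Integration.integral_cong refl) (simp add: kernel mult_ac)
    finally show "F \<xi> * fourier_kernel \<xi> (- t) * cnj (trace (t - s))
        = (LBINT \<nu>. F \<xi> * cnj (F (\<xi> - \<nu>)) * (fourier_kernel (\<xi> - \<nu>) (- s) * fourier_kernel \<nu> (- t)))" .
  qed
  also have "\<dots> = (LBINT \<nu>. LBINT \<xi>. F \<xi> * cnj (F (\<xi> - \<nu>)) * (fourier_kernel (\<xi> - \<nu>) (- s) * fourier_kernel \<nu> (- t)))"
    using lborel_pair.Fubini_integral[OF int] by simp
  also have "\<dots> = (LBINT \<nu>. shift_product_spectrum s \<nu> * fourier_kernel \<nu> (- t))"
    unfolding shift_product_spectrum_def
    by (intro Bochner_Integration.integral_cong refl) (simp flip: integral_mult_left_zero add: mult.assoc)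
  finally show ?thesis .
qed

lemma shift_product_entire_extension:
  obtains H where "H holomorphic_on UNIV" "\<And>s. H (complex_of_real s) = shift_product s t"
proof -
  define c where "c = complex_of_real (2 * pi) * \<i>"
  define T where "T = exp_transform (- c) (\<lambda>\<xi>. cnj (F \<xi>))"
  have T: "T holomorphic_on UNIV"
    unfolding T_def using integrable_spectrum spectrum_support by (intro exp_transform_holomorphic) auto
  have cnj_trace: "cnj (trace r) = T (complex_of_real r)" for r
    unfolding trace_def T_def exp_transform_def c_def
    by (subst Bochner_Integration.integral_cnj[symmetric]) (simp add: exp_cnj)
  have "(T \<circ> (\<lambda>\<sigma>. complex_of_real t - \<sigma>)) holomorphic_on UNIV"
    by (rule holomorphic_on_compose) (auto intro: holomorphic_intros holomorphic_on_subset[OF T])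
  then have "(\<lambda>\<sigma>. trace t * T (complex_of_real t - \<sigma>)) holomorphic_on UNIV"
    by (auto intro!: holomorphic_intros simp: comp_def)
  moreover have "trace t * T (complex_of_real t - complex_of_real s) = shift_product s t" for s
    by (simp add: shift_product_def cnj_trace)
  ultimately show ?thesis using that by blast
qed

end

subsection \<open>Recovering the phase\<close>

lemma unimodular_multiple_if_shift_products_eq:
  fixes a b :: "real \<Rightarrow> complex"
  assumes eq: "\<And>s t. a t * cnj (a (t - s)) = b t * cnj (b (t - s))"
  obtains c where "cmod c = 1" "\<And>t. a t = c * b t"
proof (cases "\<forall>u. b u = 0")
  case True
  have "a t * cnj (a t) = 0" for t using eq[where s=0 and t=t] True by simp
  then show thesis using that[of 1] True by simp
next
  case False
  then obtain u where u: "b u \<noteq> 0" by blast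
  have "a u * cnj (a u) = b u * cnj (b u)" using eq[where s=0 and t=u] by simp
  then have norm_eq: "cmod (a u) = cmod (b u)"
    by (metis complex_norm_square norm_ge_zero of_real_eq_iff power2_eq_imp_eq)
  then have a_u: "a u \<noteq> 0" using u by auto
  show thesis
  proof (rule that[of "cnj (b u) / cnj (a u)"])
    show "cmod (cnj (b u) / cnj (a u)) = 1" using u norm_eq by (simp add: norm_divide)
    fix t
    have "a t * cnj (a u) = b t * cnj (b u)" using eq[where s="t - u" and t=t] by simp
    then show "a t = cnj (b u) / cnj (a u) * b t" using a_u by (simp add: field_simps)
  qed
qed

lemma entire_phase_if_shift_products_eq:
  fixes f g :: "complex \<Rightarrow> complex"
  assumes f: "f holomorphic_on UNIV" and g: "g holomorphic_on UNIV"
    and eq: "\<And>s t. f (complex_of_real t) * cnj (f (complex_of_real (t - s)))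
                = g (complex_of_real t) * cnj (g (complex_of_real (t - s)))"
  shows "\<exists>\<alpha>::real. \<forall>z. f z = exp (\<i> * complex_of_real \<alpha>) * g z"
proof -
  obtain c where c: "cmod c = 1" "\<And>t. f (complex_of_real t) = c * g (complex_of_real t)"
    using unimodular_multiple_if_shift_products_eq[of "\<lambda>t. f (complex_of_real t)" "\<lambda>t. g (complex_of_real t)"] eq
    by blast
  have "c \<noteq> 0" using c(1) by auto
  then have phase: "exp (\<i> * complex_of_real (Arg c)) = c"
    using cis_Arg[of c] c(1) by (simp add: cis_conv_exp sgn_div_norm)
  have "f z - c * g z = 0" for z
    by (rule entire_eq_zero_if_zero_on_reals) (use f g c(2) in \<open>auto intro!: holomorphic_intros\<close>)
  then show ?thesis
    using phase by (intro exI[of _ "Arg c"]) (simp add: right_minus_eq)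
qed

locale stft_phase_retrieval = f: band_limited F B + g: band_limited G B
  for F G :: "real \<Rightarrow> complex" and B :: real +
  fixes \<phi> :: "real \<Rightarrow> complex" and R :: real
  assumes integrable_window: "integrable lborel \<phi>"
    and window_support: "\<And>t. \<bar>t\<bar> > R \<Longrightarrow> \<phi> t = 0"
    and window_nonzero: "\<not> (AE t in lborel. \<phi> t = 0)"
    and equal_magnitudes:
      "\<And>x \<omega>. cmod (fourier (windowed f.trace \<phi> x) \<omega>) = cmod (fourier (windowed g.trace \<phi> x) \<omega>)"
begin

lemma borel_measurable_window[measurable]: "\<phi> \<in> borel_measurable borel"
  using integrable_window by auto

definition smoothed_gap :: "real \<Rightarrow> real \<Rightarrow> complex" where
  "smoothed_gap s x = (LBINT t. (f.shift_product s t - g.shift_product s t) * window_product \<phi> s (t - x))"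

lemma norm_shift_product_diff_le:
  "norm (f.shift_product s t - g.shift_product s t) \<le> (LBINT \<xi>. norm (F \<xi>))\<^sup>2 + (LBINT \<xi>. norm (G \<xi>))\<^sup>2"
  using norm_triangle_ineq4 f.norm_shift_product_le g.norm_shift_product_le by (rule order_trans[OF _ add_mono])

lemma smoothed_gap_eq:
  assumes W: "integrable lborel (window_product \<phi> s)"
  shows "smoothed_gap s x = autocorrelation (windowed f.trace \<phi> x) s - autocorrelation (windowed g.trace \<phi> x) s"
proof -
  have Wx: "integrable lborel (\<lambda>t. window_product \<phi> s (t - x))"
    using lborel_integrable_real_affine_iff[of 1 "window_product \<phi> s" "- x"] W by simp
  have "integrable lborel (\<lambda>t. f.shift_product s t * window_product \<phi> s (t - x))"
    "integrable lborel (\<lambda>t. g.shift_product s t * window_product \<phi> s (t - x))"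
    by (rule integrable_mult_bounded[OF Wx _ f.norm_shift_product_le] integrable_mult_bounded[OF Wx _ g.norm_shift_product_le],
        simp add: f.shift_product_def[abs_def] g.shift_product_def[abs_def])+
  then show ?thesis
    unfolding smoothed_gap_def autocorrelation_windowed
    by (subst Bochner_Integration.integral_diff[symmetric]) (simp_all add: f.shift_product_def g.shift_product_def algebra_simps)
qed

lemma continuous_smoothed_gap:
  "integrable lborel (window_product \<phi> s) \<Longrightarrow> continuous_on UNIV (smoothed_gap s)"
  unfolding smoothed_gap_def[abs_def]
  by (rule continuous_on_integral_mult_shift[OF _ norm_shift_product_diff_le])
     (auto intro!: continuous_intros f.continuous_shift_product g.continuous_shift_product)

lemma shift_products_eq_if_smoothed_gap_zero:
  assumes W: "integrable lborel (window_product \<phi> s)" and nz: "\<not> (AE u in lborel. window_product \<phi> s u = 0)"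
    and zero: "\<And>x. smoothed_gap s x = 0"
  shows "f.shift_product s t = g.shift_product s t"
proof -
  define \<Delta> where "\<Delta> \<nu> = f.shift_product_spectrum s \<nu> - g.shift_product_spectrum s \<nu>" for \<nu>
  have \<Delta>: "integrable lborel \<Delta>"
    unfolding \<Delta>_def[abs_def] using f.integrable_shift_product_spectrum g.integrable_shift_product_spectrum by simp
  have gap: "f.shift_product s t - g.shift_product s t = (LBINT \<nu>. \<Delta> \<nu> * fourier_kernel \<nu> (- t))" for t
    unfolding f.shift_product_eq_inverse_fourier g.shift_product_eq_inverse_fourier \<Delta>_def
    by (subst Bochner_Integration.integral_diff[symmetric])
       (auto intro: integrable_mult_fourier_kernel f.integrable_shift_product_spectrum
         g.integrable_shift_product_spectrum simp: algebra_simps)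
  have "AE \<nu> in lborel. \<Delta> \<nu> = 0"
  proof (rule AE_zero_if_window_smoothing_zero[OF \<Delta> W _ nz])
    show "window_product \<phi> s u = 0" if "\<bar>u\<bar> > R" for u
      using that by (simp add: window_product_def window_support)
    show "(LBINT t. (LBINT \<nu>. \<Delta> \<nu> * fourier_kernel \<nu> (- t)) * window_product \<phi> s (t - x)) = 0" for x
      using zero[of x] by (simp add: smoothed_gap_def gap)
  qed
  then have "(LBINT \<nu>. \<Delta> \<nu> * fourier_kernel \<nu> (- t)) = 0"
    by (intro integral_eq_zero_AE) auto
  then show ?thesis
    using gap[of t] by simp
qed

text \<open>Equality of the magnitudes for rational \<open>x\<close> holds off one null set of shifts \<open>s\<close>; continuity in
  \<open>x\<close> then gives it for all \<open>x\<close>.\<close>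
lemma AE_smoothed_gap_zero:
  "AE s in lborel. integrable lborel (window_product \<phi> s) \<and> (\<forall>x. smoothed_gap s x = 0)"
proof -
  have int: "integrable lborel (windowed f.trace \<phi> x)" "integrable lborel (windowed g.trace \<phi> x)" for x
    by (rule integrable_windowed[OF integrable_window _ f.norm_trace_le]
        integrable_windowed[OF integrable_window _ g.norm_trace_le], simp)+
  have "AE s in lborel. \<forall>x\<in>\<rat>. autocorrelation (windowed f.trace \<phi> x) s = autocorrelation (windowed g.trace \<phi> x) s"
    by (subst AE_ball_countable)
       (auto intro: AE_autocorrelation_eq_if_norm_fourier_eq int equal_magnitudes simp: countable_rat)
  with AE_integrable_window_product[OF integrable_window] show ?thesis
  proof eventually_elim
    case (elim s)
    then have "continuous_on (closure \<rat>) (smoothed_gap s)"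
      using continuous_smoothed_gap by (simp add: Rats_closure_real)
    moreover have "smoothed_gap s x = 0" if "x \<in> \<rat>" for x
      using elim that by (simp add: smoothed_gap_eq)
    ultimately have "smoothed_gap s x = 0" for x
      by (metis continuous_constant_on_closure Rats_closure_real UNIV_I)
    with elim show ?case by blast
  qed
qed

lemma uncountable_shift_product_agreement:
  "\<not> countable {s. \<forall>t. f.shift_product s t = g.shift_product s t}"
proof
  assume "countable {s. \<forall>t. f.shift_product s t = g.shift_product s t}"
  then have "AE s in lborel. s \<notin> {s. \<forall>t. f.shift_product s t = g.shift_product s t}"
    by (intro AE_I'[OF countable_imp_null_set_lborel]) auto
  with AE_smoothed_gap_zero have "AE s in lborel. AE u in lborel. window_product \<phi> s u = 0"
    by eventually_elim (use shift_products_eq_if_smoothed_gap_zero in blast)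
  with not_AE_AE_window_product_zero[OF integrable_window window_nonzero] show False
    by simp
qed

lemma shift_products_eq: "f.shift_product s t = g.shift_product s t"
proof -
  obtain Hf Hg where H: "Hf holomorphic_on UNIV" "Hg holomorphic_on UNIV"
    and Hf: "\<And>s. Hf (complex_of_real s) = f.shift_product s t"
    and Hg: "\<And>s. Hg (complex_of_real s) = g.shift_product s t"
    using f.shift_product_entire_extension g.shift_product_entire_extension by metis
  have "Hf (complex_of_real s) - Hg (complex_of_real s) = 0"
  proof (rule ccontr)
    assume "Hf (complex_of_real s) - Hg (complex_of_real s) \<noteq> 0"
    with H have "countable {\<nu>. Hf (complex_of_real \<nu>) - Hg (complex_of_real \<nu>) = 0}"
      by (intro countable_real_zeros_of_entire) (auto intro: holomorphic_intros)
    moreover have "{s. \<forall>t. f.shift_product s t = g.shift_product s t}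
        \<subseteq> {\<nu>. Hf (complex_of_real \<nu>) - Hg (complex_of_real \<nu>) = 0}"
      by (auto simp: Hf Hg)
    ultimately show False
      using uncountable_shift_product_agreement countable_subset by blast
  qed
  then show ?thesis by (simp add: Hf Hg)
qed

theorem exp_transforms_eq_up_to_phase:
  "\<exists>\<alpha>::real. \<forall>z. exp_transform (complex_of_real (2 * pi) * \<i>) F z
    = exp (\<i> * complex_of_real \<alpha>) * exp_transform (complex_of_real (2 * pi) * \<i>) G z"
  using shift_products_eq
  by (intro entire_phase_if_shift_products_eq f.holomorphic_exp_transform g.holomorphic_exp_transform)
     (simp add: f.shift_product_def g.shift_product_def f.trace_def g.trace_def)

end

theorem mainTheorem12:
  fixes \<phi> :: "real \<Rightarrow> complex" and B :: real and f g :: "complex \<Rightarrow> complex"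
  assumes "square_integrable_on \<phi> UNIV"
    and "compactly_supported \<phi>"
    and "\<not> (AE t in lebesgue. \<phi> t = 0)"
    and "B > 0"
    and "f \<in> paley_wiener B" and "g \<in> paley_wiener B"
  shows "(\<exists>\<alpha>::real. \<forall>z. f z = exp (\<i> * complex_of_real \<alpha>) * g z) \<longleftrightarrow>
         (\<forall>x \<omega>. cmod (stft \<phi> (\<lambda>t. f (complex_of_real t)) x \<omega>) =
                 cmod (stft \<phi> (\<lambda>t. g (complex_of_real t)) x \<omega>))"
proof
  assume "\<exists>\<alpha>::real. \<forall>z. f z = exp (\<i> * complex_of_real \<alpha>) * g z"
  then show "\<forall>x \<omega>. cmod (stft \<phi> (\<lambda>t. f (complex_of_real t)) x \<omega>) = cmod (stft \<phi> (\<lambda>t. g (complex_of_real t)) x \<omega>)"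
    by (auto simp: stft_cmult norm_mult)
next
  assume magnitudes: "\<forall>x \<omega>. cmod (stft \<phi> (\<lambda>t. f (complex_of_real t)) x \<omega>) = cmod (stft \<phi> (\<lambda>t. g (complex_of_real t)) x \<omega>)"
  obtain \<psi> R where \<psi>: "integrable lborel \<psi>" "\<And>t. \<bar>t\<bar> > R \<Longrightarrow> \<psi> t = 0"
    "\<not> (AE t in lborel. \<psi> t = 0)" "AE t in lborel. \<phi> t = \<psi> t"
    using compactly_supported_window_repr[OF assms(1-3)] by blast
  obtain F G where F: "integrable lborel F" "\<And>\<xi>. \<bar>\<xi>\<bar> > B \<Longrightarrow> F \<xi> = 0" "f = exp_transform (complex_of_real (2 * pi) * \<i>) F"
    and G: "integrable lborel G" "\<And>\<xi>. \<bar>\<xi>\<bar> > B \<Longrightarrow> G \<xi> = 0" "g = exp_transform (complex_of_real (2 * pi) * \<i>) G"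
    using paley_wiener_exp_transform[OF assms(5)] paley_wiener_exp_transform[OF assms(6)] by metis
  interpret f: band_limited F B using F by unfold_locales
  interpret g: band_limited G B using G by unfold_locales
  have "(\<lambda>t. f (complex_of_real t)) = f.trace" "(\<lambda>t. g (complex_of_real t)) = g.trace"
    by (auto simp: F(3) G(3) f.trace_def g.trace_def)
  with magnitudes \<psi>(1,4) have "cmod (fourier (windowed f.trace \<psi> x) \<omega>) = cmod (fourier (windowed g.trace \<psi> x) \<omega>)" for x \<omega>
    by (auto simp: stft_eq_fourier_windowed)
  with \<psi> interpret stft_phase_retrieval F G B \<psi> R
    by unfold_locales
  show "\<exists>\<alpha>::real. \<forall>z. f z = exp (\<i> * complex_of_real \<alpha>) * g z"
    using exp_transforms_eq_up_to_phase by (simp add: F(3) G(3))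
qed

end
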